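(* Let $(\frac pq,\frac rs)$ be a Farey pair of order $n$ with $q\ge 2$, let $d=\lfloor n/q\rfloor$, let $\alpha\in(0,1)$, $\beta=1-\alpha$, and let $\phi_\alpha(t)=(t^q-\beta)^d-\alpha^d t^{qd-s}$. If $t_0$ is a multiple root of $\phi_\alpha$, then $t_0^s$ is a real number and $t_0^s\ne 1$.
   Context: $\mathcal{F}_n=\{p/q:0\le p<q\le n,\ \gcd(p,q)=1\}$. A Farey pair of order $n$ is a pair $(\frac pq,\frac rs)$ of elements of $\mathcal{F}_n$ with $\frac pq<\frac rs$ and no element of $\mathcal{F}_n$ strictly between them. $\phi_\alpha$ (the Ito rational function of the pair) is regarded as a rational function of the complex variable $t$. *)

theory Defs
  imports "HOL-Complex_Analysis.Complex_Analysis"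
begin

definition in_farey :: "nat \<Rightarrow> nat \<Rightarrow> nat \<Rightarrow> bool" where
  "in_farey n a b \<longleftrightarrow> a < b \<and> b \<le> n \<and> coprime a b"

definition farey_pair :: "nat \<Rightarrow> nat \<Rightarrow> nat \<Rightarrow> nat \<Rightarrow> nat \<Rightarrow> bool" where
  "farey_pair n p q r s \<longleftrightarrow>
     in_farey n p q \<and> in_farey n r s \<and> real p / real q < real r / real s \<and>
     \<not> (\<exists>a b. in_farey n a b \<and> real p / real q < real a / real b
                 \<and> real a / real b < real r / real s)"

definition ito_phi :: "real \<Rightarrow> nat \<Rightarrow> nat \<Rightarrow> nat \<Rightarrow> complex \<Rightarrow> complex" where
  "ito_phi \<alpha> q d s t =
     (t ^ q - complex_of_real (1 - \<alpha>)) ^ d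
     - complex_of_real \<alpha> ^ d * t powi (int (q * d) - int s)"

end

theory Submission
  imports Defs
begin

text \<open>Write \<open>u = t^q - \<beta>\<close> and \<open>m = qd - s\<close>, so that \<open>\<phi>(t) = u^d - \<alpha>^d t^m\<close>.
  At a multiple root the logarithmic derivatives of \<open>u^d\<close> and \<open>\<alpha>^d t^m\<close> agree,
  \<open>dq t^q / u = m\<close>, which forces \<open>s t^q = -m\<beta>\<close>: thus \<open>t^q\<close> and \<open>u = -qd\<beta>/s\<close> are real,
  and so is \<open>t^s = \<alpha>^d (t^q)^d / u^d\<close>. If \<open>t^s = 1\<close>, the root equation gives
  \<open>|u| = \<alpha> |t^q|\<close>, i.e. \<open>qd = \<alpha> |qd - s|\<close>, which is impossible for \<open>\<alpha> < 1\<close> because the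
  Farey condition \<open>s \<le> n\<close> keeps \<open>|qd - s| \<le> qd\<close>.\<close>

lemma ito_phi_has_field_derivative:
  assumes "t \<noteq> 0"
  shows "(ito_phi \<alpha> q d s has_field_derivative
      of_nat d * of_nat q * t ^ (q - 1) * (t ^ q - of_real (1 - \<alpha>)) ^ (d - 1)
      - of_real \<alpha> ^ d * of_int (int (q * d) - int s) * t powi (int (q * d) - int s - 1)) (at t)"
  unfolding ito_phi_def
  by (rule derivative_eq_intros refl | use assms in simp)+

lemma ito_phi_eq_0_iff:
  assumes "t \<noteq> 0"
  shows "ito_phi \<alpha> q d s t = 0 \<longleftrightarrow>
    t ^ s * (t ^ q - of_real (1 - \<alpha>)) ^ d = of_real \<alpha> ^ d * t ^ (q * d)"
proof -
  have "t ^ s * (of_real \<alpha> ^ d * t powi (int (q * d) - int s)) = of_real \<alpha> ^ d * t ^ (q * d)"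
    using assms by (simp add: power_int_diff flip: of_nat_mult)
  moreover have "t ^ s \<noteq> 0"
    using assms by simp
  ultimately show ?thesis
    unfolding ito_phi_def right_minus_eq by (metis mult_left_cancel)
qed

lemma log_derivative_eq:
  fixes t u a :: "'a::field"
  assumes "t \<noteq> 0" "a \<noteq> 0" "1 \<le> d" "1 \<le> q"
    and root: "u ^ d = a ^ d * t powi m"
    and crit: "of_nat d * of_nat q * t ^ (q - 1) * u ^ (d - 1) = a ^ d * of_int m * t powi (m - 1)"
  shows "of_nat (d * q) * t ^ q = of_int m * u"
proof -
  have "(a ^ d * t powi m) * (of_nat (d * q) * t ^ q) = of_nat d * of_nat q * t ^ q * u ^ d"
    by (simp add: root mult_ac)
  also have "\<dots> = (of_nat d * of_nat q * t ^ (q - 1) * u ^ (d - 1)) * (t * u)"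
    using assms(3,4) by (simp add: mult_ac flip: power_minus_mult[of q t] power_minus_mult[of d u])
  also have "\<dots> = (a ^ d * of_int m * t powi (m - 1)) * (t * u)"
    by (simp only: crit)
  also have "\<dots> = (a ^ d * t powi m) * (of_int m * u)"
    using assms(1) by (simp add: mult_ac flip: power_int_minus_mult[of t m])
  finally have "(a ^ d * t powi m) * (of_nat (d * q) * t ^ q) = (a ^ d * t powi m) * (of_int m * u)" .
  moreover have "a ^ d * t powi m \<noteq> 0"
    using assms(1,2) by simp
  ultimately show ?thesis by (metis mult_left_cancel)
qed

lemma ito_phi_multiple_root_pow_q:
  fixes t :: complex
  assumes "\<alpha> \<noteq> 0" "1 \<le> d" "1 \<le> q" "0 < s" "t \<noteq> 0"
    and root: "ito_phi \<alpha> q d s t = 0" and crit: "deriv (ito_phi \<alpha> q d s) t = 0"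
  shows "t ^ q = of_real ((real s - real (q * d)) * (1 - \<alpha>) / real s)"
proof -
  define m where "m = int (q * d) - int s"
  define u where "u = t ^ q - of_real (1 - \<alpha>)"
  have "u ^ d = of_real \<alpha> ^ d * t powi m"
    using root by (simp add: ito_phi_def m_def u_def)
  moreover have "of_nat d * of_nat q * t ^ (q - 1) * u ^ (d - 1) = of_real \<alpha> ^ d * of_int m * t powi (m - 1)"
    using crit DERIV_imp_deriv[OF ito_phi_has_field_derivative[OF \<open>t \<noteq> 0\<close>]]
    by (simp add: m_def u_def)
  ultimately have "of_nat (d * q) * t ^ q = of_int m * u"
    using assms(1-3,5) by (intro log_derivative_eq[of t "of_real \<alpha>"]) simp_all
  then have "of_nat s * t ^ q = of_real ((real s - real (q * d)) * (1 - \<alpha>))"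
    by (simp add: m_def u_def algebra_simps)
  then show ?thesis
    using \<open>0 < s\<close> by (simp add: field_simps)
qed

lemma ito_phi_multiple_root_pow_s_real:
  fixes t :: complex
  assumes "\<alpha> \<noteq> 0" "1 \<le> d" "1 \<le> q" "0 < s" "t \<noteq> 0"
    and root: "ito_phi \<alpha> q d s t = 0" and "deriv (ito_phi \<alpha> q d s) t = 0"
  shows "t ^ s \<in> \<real>"
proof -
  define x where "x = (real s - real (q * d)) * (1 - \<alpha>) / real s"
  have tq: "t ^ q = of_real x"
    unfolding x_def using assms by (rule ito_phi_multiple_root_pow_q)
  have eq: "t ^ s * of_real ((x - (1 - \<alpha>)) ^ d) = of_real (\<alpha> ^ d * x ^ d)"
    using root \<open>t \<noteq> 0\<close> by (simp add: ito_phi_eq_0_iff power_mult tq)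
  moreover have "\<alpha> ^ d * x ^ d \<noteq> 0"
    using tq \<open>t \<noteq> 0\<close> \<open>\<alpha> \<noteq> 0\<close> by auto
  ultimately have "(x - (1 - \<alpha>)) ^ d \<noteq> 0"
    by force
  with eq have "t ^ s = of_real (\<alpha> ^ d * x ^ d / (x - (1 - \<alpha>)) ^ d)"
    by (simp add: eq_divide_eq del: of_real_power)
  then show ?thesis
    by simp
qed

lemma ito_phi_multiple_root_pow_s_neq_1:
  fixes t :: complex
  assumes "0 < \<alpha>" "\<alpha> < 1" "1 \<le> d" "1 \<le> q" "0 < s" "s \<le> 2 * (q * d)" "t \<noteq> 0"
    and root: "ito_phi \<alpha> q d s t = 0" and "deriv (ito_phi \<alpha> q d s) t = 0"
  shows "t ^ s \<noteq> 1"
proof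
  assume "t ^ s = 1"
  define N where "N = real (q * d)"
  define x where "x = (real s - N) * (1 - \<alpha>) / real s"
  have tq: "t ^ q = of_real x"
    unfolding x_def N_def using assms(1,3-5,7-) by (intro ito_phi_multiple_root_pow_q) simp_all
  have "of_real ((x - (1 - \<alpha>)) ^ d) = (of_real ((\<alpha> * x) ^ d) :: complex)"
    using root \<open>t \<noteq> 0\<close> \<open>t ^ s = 1\<close>
    by (simp add: ito_phi_eq_0_iff power_mult tq power_mult_distrib)
  then have "\<bar>x - (1 - \<alpha>)\<bar> ^ d = \<bar>\<alpha> * x\<bar> ^ d"
    by (metis of_real_eq_iff power_abs)
  then have "\<bar>x - (1 - \<alpha>)\<bar> = \<alpha> * \<bar>x\<bar>"
    using \<open>1 \<le> d\<close> \<open>0 < \<alpha>\<close> by (auto dest: power_eq_imp_eq_base simp: abs_mult)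
  moreover have "x - (1 - \<alpha>) = - N * (1 - \<alpha>) / real s"
    using \<open>0 < s\<close> by (simp add: x_def field_simps)
  ultimately have "N * ((1 - \<alpha>) / real s) = \<alpha> * \<bar>real s - N\<bar> * ((1 - \<alpha>) / real s)"
    using assms(2) by (simp add: x_def abs_mult abs_divide N_def)
  then have "N = \<alpha> * \<bar>real s - N\<bar>"
    using assms(2,5) by simp
  moreover have "real s \<le> 2 * N"
    using assms(6) unfolding N_def by (metis of_nat_le_iff of_nat_mult of_nat_numeral)
  then have "\<alpha> * \<bar>real s - N\<bar> \<le> \<alpha> * N"
    using \<open>0 < \<alpha>\<close> \<open>0 < s\<close> by (intro mult_left_mono) auto
  moreover have "\<alpha> * N < N"
    using assms(2-4) by (simp add: N_def)
  ultimately show False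
    by linarith
qed

lemma farey_pair_denominators:
  assumes "farey_pair n p q r s"
  shows "0 < s" "s \<le> n" "q \<le> n"
  using assms by (auto simp: farey_pair_def in_farey_def)

lemma less_double_mult_div:
  fixes n q :: nat
  assumes "0 < q" "q \<le> n"
  shows "n < 2 * (q * (n div q))"
proof -
  have "n < q * (n div q) + q"
    using assms(1) by (metis add_less_cancel_left mod_less_divisor div_mult_mod_eq mult.commute)
  moreover have "q \<le> q * (n div q)"
    using assms by (simp add: Suc_le_eq div_greater_zero_iff)
  ultimately show ?thesis
    by linarith
qed

theorem lemma4p1:
  fixes n p q r s :: nat and \<alpha> :: real and t0 :: complex
  assumes "farey_pair n p q r s"
    and "q \<ge> 2"
    and "0 < \<alpha>" and "\<alpha> < 1"
    and "t0 \<noteq> 0"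
    and "ito_phi \<alpha> q (n div q) s t0 = 0"
    and "deriv (ito_phi \<alpha> q (n div q) s) t0 = 0"
  shows "t0 ^ s \<in> \<real> \<and> t0 ^ s \<noteq> 1"
proof -
  have "0 < s" "s \<le> n" "q \<le> n"
    using assms(1) by (rule farey_pair_denominators)+
  moreover from \<open>q \<le> n\<close> \<open>q \<ge> 2\<close> have "1 \<le> n div q" "n < 2 * (q * (n div q))"
    by (simp_all add: Suc_le_eq div_greater_zero_iff less_double_mult_div)
  ultimately show ?thesis
    using assms(2-) ito_phi_multiple_root_pow_s_real[of \<alpha> "n div q" q s t0]
      ito_phi_multiple_root_pow_s_neq_1[of \<alpha> "n div q" q s t0]
    by auto
qed

end
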